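(* For every positive integer $k$, the binary word $w_k=a^kba^kba^{2k}$ (of length $4k+2$) contains exactly $k+\left(\lfloor k/2\rfloor+1\right)^2+(k+1)\lceil k/2\rceil$ distinct abelian squares as factors. Consequently, the maximum number of distinct abelian square factors of a binary word of length $4k+2$ is at least $k+\left(\lfloor k/2\rfloor+1\right)^2+(k+1)\lceil k/2\rceil$.
   Context: For a word $u$ over $\{a,b\}$ and a letter $c$, $|u|_c$ is the number of occurrences of $c$ in $u$, and the Parikh vector of $u$ is $\mathcal{P}(u)=[|u|_a,|u|_b]$. A nonempty word $uv$ is an abelian square if $\mathcal{P}(u)=\mathcal{P}(v)$ (so $|u|=|v|\ge 1$). The number of distinct abelian squares in $w$ is the number of distinct words (as strings) that occur as factors (contiguous subwords) of $w$ and are abelian squares. $a^m$ denotes $m$ consecutive copies of the letter $a$. *)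

theory Defs
  imports Main
begin

datatype letter = a | b

definition parikh :: "letter list \<Rightarrow> nat \<times> nat" where
  "parikh u = (count_list u a, count_list u b)"

definition abelian_square :: "letter list \<Rightarrow> bool" where
  "abelian_square w \<longleftrightarrow> (\<exists>u v. w = u @ v \<and> u \<noteq> [] \<and> parikh u = parikh v)"

definition factors :: "letter list \<Rightarrow> letter list set" where
  "factors w = {u. \<exists>p s. w = p @ u @ s}"

definition num_abelian_squares :: "letter list \<Rightarrow> nat" where
  "num_abelian_squares w = card {u \<in> factors w. abelian_square u}"

definition max_abelian_squares :: "nat \<Rightarrow> nat" where
  "max_abelian_squares n = Max (num_abelian_squares ` {w. length w = n})"

definition wk :: "nat \<Rightarrow> letter list" where
  "wk k = replicate k a @ [b] @ replicate k a @ [b] @ replicate (2*k) a"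

end

theory Submission
  imports Defs
begin

text \<open>
  Since the halves of an abelian square contain equally many letters b, every abelian square
  factor of \<open>w\<^sub>k\<close> contains either no b or both of them. In the first case it is
  \<open>a\<^sup>2\<^sup>m\<close> with \<open>1 \<le> m \<le> k\<close>, as the longest block of a's has length 2k. In the
  second case it is \<open>a\<^sup>i b a\<^sup>k b a\<^sup>j\<close> with \<open>i \<le> k\<close>, \<open>j \<le> 2k\<close>, and this word is an
  abelian square exactly when its length is even and its midpoint lies in the central block,
  i.e. \<open>i + j + k\<close> is even and \<open>|i - j| \<le> k\<close>. For fixed i there are
  \<open>\<lfloor>(i+k)/2\<rfloor> + 1\<close> admissible j, and summing over \<open>i \<le> k\<close> gives the closed form.
\<close>

lemma length_eq_count_a_plus_count_b: "length w = count_list w a + count_list w b"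
proof (induction w)
  case (Cons c w) then show ?case by (cases c) auto
qed simp

lemma replicate_a_if_b_notin: "b \<notin> set w \<Longrightarrow> w = replicate (length w) a"
  by (metis letter.exhaust replicate_length_same)

lemma abelian_square_iff_halves:
  "abelian_square u \<longleftrightarrow> u \<noteq> [] \<and> even (length u)
     \<and> count_list (take (length u div 2) u) b = count_list (drop (length u div 2) u) b"
proof
  assume "abelian_square u"
  then obtain x y where u: "u = x @ y" "x \<noteq> []" and "parikh x = parikh y"
    unfolding abelian_square_def by blast
  then have counts: "count_list x a = count_list y a" "count_list x b = count_list y b"
    unfolding parikh_def by auto
  then have "length x = length y" by (simp add: length_eq_count_a_plus_count_b)
  then show "u \<noteq> [] \<and> even (length u)
     \<and> count_list (take (length u div 2) u) b = count_list (drop (length u div 2) u) b"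
    using u counts by simp
next
  assume "u \<noteq> [] \<and> even (length u)
     \<and> count_list (take (length u div 2) u) b = count_list (drop (length u div 2) u) b"
  moreover define x y where "x = take (length u div 2) u" and "y = drop (length u div 2) u"
  moreover have "length u div 2 > 0"
    using calculation(1) by (cases u) (auto elim!: evenE)
  ultimately have "u = x @ y" "x \<noteq> []" "length x = length y" "count_list x b = count_list y b"
    by (auto elim: evenE)
  moreover from this have "count_list x a = count_list y a"
    using length_eq_count_a_plus_count_b[of x] length_eq_count_a_plus_count_b[of y] by simp
  ultimately show "abelian_square u"
    unfolding abelian_square_def parikh_def by auto
qed

lemma count_b_abelian_square_even: "abelian_square u \<Longrightarrow> even (count_list u b)"
  by (metis abelian_square_iff_halves append_take_drop_id count_list_append even_add)

lemma abelian_square_replicate_a_iff: "abelian_square (replicate n a) \<longleftrightarrow> n > 0 \<and> even n"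
  by (simp add: abelian_square_iff_halves)

definition two_b :: "nat \<Rightarrow> nat \<Rightarrow> nat \<Rightarrow> letter list" where
  "two_b i k j = replicate i a @ b # replicate k a @ b # replicate j a"

lemma count_b_two_b [simp]: "count_list (two_b i k j) b = 2"
  by (simp add: two_b_def)

lemma count_b_take_two_b:
  "count_list (take h (two_b i k j)) b = (if h \<le> i then 0 else if h \<le> i + k + 1 then 1 else 2)"
  by (auto simp: two_b_def take_Cons' min_def)

lemma abelian_square_two_b_iff:
  "abelian_square (two_b i k j) \<longleftrightarrow> even (i + j + k) \<and> i \<le> j + k \<and> j \<le> i + k"
proof -
  let ?u = "two_b i k j" and ?h = "(i + j + k + 2) div 2"
  have "length ?u = i + j + k + 2" by (simp add: two_b_def)
  moreover have "count_list (take ?h ?u) b + count_list (drop ?h ?u) b = 2"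
    by (metis append_take_drop_id count_b_two_b count_list_append)
  ultimately have "abelian_square ?u \<longleftrightarrow> even (i + j + k) \<and> count_list (take ?h ?u) b = 1"
    by (auto simp: abelian_square_iff_halves)
  also have "\<dots> \<longleftrightarrow> even (i + j + k) \<and> i < ?h \<and> ?h \<le> i + k + 1"
    unfolding count_b_take_two_b by auto
  also have "\<dots> \<longleftrightarrow> even (i + j + k) \<and> i \<le> j + k \<and> j \<le> i + k"
  proof (cases "even (i + j + k)")
    case True
    then obtain c where c: "i + j + k = 2 * c" by blast
    then have "?h = c + 1" by simp
    then show ?thesis using c by auto
  qed simp
  finally show ?thesis .
qed

lemma replicate_a_Cons_b_eq_iff:
  "replicate i a @ b # r = replicate i' a @ b # r' \<longleftrightarrow> i = i' \<and> r = r'"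
proof (induction i arbitrary: i')
  case 0 then show ?case by (cases i') auto
next
  case (Suc i) then show ?case by (cases i') auto
qed

lemma two_b_eq_iff: "two_b i k j = two_b i' k j' \<longleftrightarrow> i = i' \<and> j = j'"
  by (simp add: two_b_def replicate_a_Cons_b_eq_iff)

lemma nth_mem_factor: "length p \<le> n \<Longrightarrow> n < length p + length u \<Longrightarrow> (p @ u @ s) ! n \<in> set u"
  by (auto simp: nth_append)

lemma length_wk: "length (wk k) = 4 * k + 2"
  by (simp add: wk_def)

lemma wk_nth_b: "wk k ! k = b" "wk k ! (2 * k + 1) = b"
  by (simp_all add: wk_def nth_append)

lemma count_b_wk: "count_list (wk k) b = 2"
  by (simp add: wk_def)

lemma wk_eq_replicate_two_b_replicate:
  assumes "i \<le> k" "j \<le> 2 * k"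
  shows "wk k = replicate (k - i) a @ two_b i k j @ replicate (2 * k - j) a"
proof -
  have "replicate k a = replicate (k - i) a @ replicate i a"
       "replicate (2 * k) a = replicate j a @ replicate (2 * k - j) a"
    using assms by (simp_all flip: replicate_add)
  then show ?thesis by (simp add: wk_def two_b_def)
qed

lemma length_b_free_factor_wk:
  assumes "wk k = p @ u @ s" "b \<notin> set u"
  shows "length u \<le> 2 * k"
proof -
  have "\<not> (length p \<le> n \<and> n < length p + length u)" if "wk k ! n = b" for n
    using nth_mem_factor[of p n u s] that assms by auto
  from this[OF wk_nth_b(1)] this[OF wk_nth_b(2)]
  show ?thesis using arg_cong[OF assms(1), of length] by (simp add: length_wk) presburger
qed

lemma factor_wk_with_both_b:
  assumes w: "wk k = p @ u @ s" and "count_list u b = 2"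
  obtains i j where "i \<le> k" "j \<le> 2 * k" "u = two_b i k j"
proof -
  have "count_list p b = 0" "count_list s b = 0"
    using arg_cong[OF w, of "\<lambda>w. count_list w b"] assms(2) by (simp_all add: count_b_wk)
  then have bp: "b \<notin> set p" and bs: "b \<notin> set s"
    by (simp_all add: count_list_0_iff)
  then have p: "p = replicate (length p) a" and s: "s = replicate (length s) a"
    using replicate_a_if_b_notin by blast+
  have len: "length p + length u + length s = 4 * k + 2"
    using arg_cong[OF w, of length] by (simp add: length_wk)
  have "length p \<le> k"
    using nth_mem_factor[of "[]" k p "u @ s"] w bp wk_nth_b(1)[of k] by fastforce
  moreover have "length s \<le> 2 * k"
    using nth_mem_factor[of "p @ u" "2 * k + 1" s "[]"] w len bs wk_nth_b(2)[of k] by fastforce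
  moreover define i j where "i = k - length p" and "j = 2 * k - length s"
  ultimately have "i \<le> k" "j \<le> 2 * k" "wk k = p @ two_b i k j @ s"
    using wk_eq_replicate_two_b_replicate[of i k j] p s by (auto simp del: replicate_length_same)
  with w show thesis using that by simp
qed

definition balanced_pairs :: "nat \<Rightarrow> (nat \<times> nat) set" where
  "balanced_pairs k = {(i, j). i \<le> k \<and> j \<le> i + k \<and> even (i + j + k)}"

lemma abelian_square_factors_wk:
  "{u \<in> factors (wk k). abelian_square u}
     = (\<lambda>m. replicate (2 * m) a) ` {1..k} \<union> (\<lambda>(i, j). two_b i k j) ` balanced_pairs k"
    (is "?L = ?A \<union> ?B")
proof (intro equalityI subsetI)
  fix u assume "u \<in> ?L"
  then obtain p s where w: "wk k = p @ u @ s" and sq: "abelian_square u"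
    unfolding factors_def by blast
  have "count_list u b \<le> 2"
    using arg_cong[OF w, of "\<lambda>w. count_list w b"] by (simp add: count_b_wk)
  with count_b_abelian_square_even[OF sq] consider "count_list u b = 0" | "count_list u b = 2"
    by fastforce
  then show "u \<in> ?A \<union> ?B"
  proof cases
    case 1
    then have "b \<notin> set u" by (simp add: count_list_0_iff)
    then have "u = replicate (2 * (length u div 2)) a" "length u \<le> 2 * k" "length u \<noteq> 0"
      using sq length_b_free_factor_wk[OF w] replicate_a_if_b_notin[of u]
      by (auto simp: abelian_square_iff_halves)
    then show ?thesis by fastforce
  next
    case 2
    then obtain i j where "i \<le> k" "u = two_b i k j"
      using factor_wk_with_both_b[OF w] by blast
    with sq have "(i, j) \<in> balanced_pairs k"
      by (simp add: abelian_square_two_b_iff balanced_pairs_def)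
    with \<open>u = two_b i k j\<close> show ?thesis by force
  qed
next
  fix u assume "u \<in> ?A \<union> ?B"
  then show "u \<in> ?L"
  proof
    assume "u \<in> ?A"
    then obtain m where m: "m \<in> {1..k}" "u = replicate (2 * m) a" by blast
    then have "wk k = (replicate k a @ b # replicate k a @ [b]) @ u @ replicate (2 * k - 2 * m) a"
      by (simp add: wk_def flip: replicate_add)
    then have "u \<in> factors (wk k)" unfolding factors_def by blast
    then show "u \<in> ?L"
      using m by (simp add: abelian_square_replicate_a_iff)
  next
    assume "u \<in> ?B"
    then obtain i j where "(i, j) \<in> balanced_pairs k" "u = two_b i k j" by auto
    then show "u \<in> ?L"
      using wk_eq_replicate_two_b_replicate[of i k j]
      by (auto simp: factors_def balanced_pairs_def abelian_square_two_b_iff)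
  qed
qed

lemma card_parity_class: "card {j. j \<le> n \<and> even (n + j)} = n div 2 + 1"
proof -
  have "{j. j \<le> n \<and> even (n + j)} = (\<lambda>t. n - 2 * t) ` {..n div 2}"
  proof (intro set_eqI iffI)
    fix j assume "j \<in> {j. j \<le> n \<and> even (n + j)}"
    then have "j = n - 2 * ((n - j) div 2)" "(n - j) div 2 \<le> n div 2" by auto
    then show "j \<in> (\<lambda>t. n - 2 * t) ` {..n div 2}" by blast
  qed auto
  moreover have "inj_on (\<lambda>t. n - 2 * t) {..n div 2}" by (auto simp: inj_on_def)
  ultimately show ?thesis by (simp add: card_image)
qed

lemma sum_half_plus_one_even: "(\<Sum>n<2 * (m::nat). n div 2 + 1) = m * (m + 1)"
  by (induction m) (simp_all add: lessThan_Suc)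

lemma sum_half_plus_one_odd: "(\<Sum>n<2 * (m::nat) + 1. n div 2 + 1) = (m + 1) ^ 2"
  using sum_half_plus_one_even[of m] by (simp add: power2_eq_square)

lemma card_balanced_pairs:
  "card (balanced_pairs k) = (k div 2 + 1) ^ 2 + (k + 1) * ((k + 1) div 2)"
proof -
  have "balanced_pairs k = Sigma {..k} (\<lambda>i. {j. j \<le> i + k \<and> even (i + k + j)})"
    by (auto simp: balanced_pairs_def ac_simps)
  then have "card (balanced_pairs k) = (\<Sum>i\<le>k. card {j. j \<le> i + k \<and> even (i + k + j)})"
    by (simp add: card_SigmaI)
  also have "\<dots> = (\<Sum>i\<le>k. (i + k) div 2 + 1)"
    by (simp only: card_parity_class)
  also have "\<dots> = (\<Sum>n\<in>{k..<2 * k + 1}. n div 2 + 1)"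
    by (rule sum.reindex_bij_witness[of _ "\<lambda>n. n - k" "\<lambda>i. i + k"]) auto
  finally have "card (balanced_pairs k) = (\<Sum>n\<in>{k..<2 * k + 1}. n div 2 + 1)" .
  moreover have "(\<Sum>n<k. n div 2 + 1) + (\<Sum>n\<in>{k..<2 * k + 1}. n div 2 + 1) = (k + 1) ^ 2"
    unfolding sum_half_plus_one_odd[symmetric] lessThan_atLeast0
    by (rule sum.atLeastLessThan_concat) simp_all
  moreover have "(\<Sum>n<k. n div 2 + 1) + ((k div 2 + 1) ^ 2 + (k + 1) * ((k + 1) div 2)) = (k + 1) ^ 2"
  proof (cases "even k")
    case True
    then obtain m where "k = 2 * m" by blast
    then show ?thesis
      using sum_half_plus_one_even[of m] by (simp add: power2_eq_square algebra_simps)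
  next
    case False
    then obtain m where "k = 2 * m + 1" by (blast elim: oddE)
    then show ?thesis
      using sum_half_plus_one_odd[of m] by (simp add: power2_eq_square algebra_simps)
  qed
  ultimately show ?thesis by linarith
qed

lemma finite_words_of_length: "finite {w :: letter list. length w = n}"
proof -
  have "(UNIV :: letter set) = {a, b}" using letter.exhaust by auto
  then have "finite (UNIV :: letter set)" by (metis finite.emptyI finite.insertI)
  then show ?thesis using finite_lists_length_eq[of UNIV n] by simp
qed

theorem mainTheorem3:
  fixes k :: nat
  assumes "k \<ge> 1"
  shows "length (wk k) = 4*k + 2
    \<and> num_abelian_squares (wk k) = k + (k div 2 + 1)^2 + (k + 1) * ((k + 1) div 2)
    \<and> max_abelian_squares (4*k + 2) \<ge> k + (k div 2 + 1)^2 + (k + 1) * ((k + 1) div 2)"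
  \<comment> \<open>the count holds for \<open>k = 0\<close> as well\<close>
proof -
  have "inj_on (\<lambda>m. replicate (2 * m) a) {1..k}"
    by (auto simp: inj_on_def)
  moreover have "inj_on (\<lambda>(i, j). two_b i k j) (balanced_pairs k)"
    by (auto simp: inj_on_def two_b_eq_iff)
  moreover have "finite (balanced_pairs k)"
    by (rule finite_subset[of _ "{..k} \<times> {..2 * k}"]) (auto simp: balanced_pairs_def)
  moreover have "(\<lambda>m. replicate (2 * m) a) ` {1..k} \<inter> (\<lambda>(i, j). two_b i k j) ` balanced_pairs k = {}"
    by (force dest: arg_cong[of _ _ "\<lambda>w. count_list w b"])
  ultimately have count: "num_abelian_squares (wk k) = k + card (balanced_pairs k)"
    unfolding num_abelian_squares_def abelian_square_factors_wk
    by (simp add: card_Un_disjoint card_image)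
  have "num_abelian_squares (wk k) \<le> max_abelian_squares (4 * k + 2)"
    unfolding max_abelian_squares_def
    by (rule Max_ge) (simp_all add: finite_words_of_length length_wk)
  then show ?thesis
    using count by (simp add: length_wk card_balanced_pairs)
qed

end
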